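(* In the pure Call-by-Name $\lambda$-calculus with observation $\mathrm{obs}(M)={\downarrow}\{\omega(M)\}$ (as in the context), the parallel reduction $\rightsquigarrow_{pd}$ is an $\mathrm{obs}$-normalizing (multi-step) strategy for $\to_\beta$, and for every term $M$, $M\rightsquigarrow_{pd}^{\mathrm{obs}}\mathrm{BT}(M)$.
   Context: Pure $\lambda$-terms $M::=x\mid\lambda x.M\mid MM$; $\to_\beta$ is the closure of $(\lambda x.M)N\mapsto M\{N/x\}$ under all contexts. Head reduction $\to_h$ is the closure of $\beta$ under head contexts $H::=[\,]\mid\lambda x.H\mid HM$. Parallel reduction $\rightsquigarrow_{pd}$: if $M\to_hM'$ then $M\rightsquigarrow_{pd}M'$; if $M$ is $\beta$-normal then $M\rightsquigarrow_{pd}M$; otherwise ($M$ $\to_h$-normal but not $\beta$-normal) $\lambda x.P\rightsquigarrow_{pd}\lambda x.P'$ if $P\rightsquigarrow_{pd}P'$, and $P_1P_2\rightsquigarrow_{pd}P_1'P_2'$ if $P_1\rightsquigarrow_{pd}P_1'$ and $P_2\rightsquigarrow_{pd}P_2'$. Partial terms $P::=\Omega\mid x\mid PP\mid\lambda x.P$, preordered by the least reflexive-transitive relation $\le$ with $\Omega\le P$, $P_1P_2\le P_1'P_2'$ if $P_i\le P_i'$, $\lambda x.P\le\lambda x.P'$ if $P\le P'$. $\mathrm{PNF}$: $\Omega\in\mathrm{PNF}$, and $\lambda x_1\dots x_n.xA_1\dots A_m\in\mathrm{PNF}$ if all $A_i\in\mathrm{PNF}$. $\omega(M)=\Omega$ if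 $M$ is not a head normal form (a term $\lambda\vec x.xM_1\dots M_p$), and $\omega(\lambda\vec x.xM_1\dots M_p)=\lambda\vec x.x\,\omega(M_1)\dots\omega(M_p)$. ${\downarrow}\mathcal S=\{Q\in\mathrm{PNF}\mid Q\le S\text{ for some }S\in\mathcal S\}$; $\mathrm{BT}(M)=\bigcup_{M\to_\beta^*N}{\downarrow}\{\omega(N)\}$. $\mathrm{obs}$ takes values in the ideal completion of $\mathrm{PNF}$ (ordered by inclusion, suprema of chains are unions). For a relation $R$, $M\,R^{\mathrm{obs}}\,\mathbf r$ means there is a maximal $R$-sequence $(M_n)_n$ from $M$ (infinite, or finite ending in an $R$-normal term then continued constantly) with $\bigcup_n\mathrm{obs}(M_n)=\mathbf r$; $\mathrm{Lim}(M,R)$ is the set of such $\mathbf r$. A relation $R'$ is $\mathrm{obs}$-normalizing for $R$ if it is asymptotically complete (for all $M$, $M R^{\mathrm{obs}}\mathbf q$ implies $M R'^{\mathrm{obs}}\mathbf p$ for some $\mathbf p\supseteq\mathbf q$) and asymptotically uniform (for all $M$, every element of $\mathrm{Lim}(M,R')$ is maximal in $\mathrm{Lim}(M,R')$). *)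

theory Defs
  imports Main
begin

datatype dB = Var nat | App dB dB | Abs dB

primrec lift :: "dB \<Rightarrow> nat \<Rightarrow> dB" where
  "lift (Var i) k = (if i < k then Var i else Var (i + 1))"
| "lift (App s t) k = App (lift s k) (lift t k)"
| "lift (Abs s) k = Abs (lift s (k + 1))"

primrec subst :: "dB \<Rightarrow> dB \<Rightarrow> nat \<Rightarrow> dB" where
  "subst (Var i) s k = (if k < i then Var (i - 1) else if i = k then s else Var i)"
| "subst (App t u) s k = App (subst t s k) (subst u s k)"
| "subst (Abs t) s k = Abs (subst t (lift s 0) (k + 1))"

inductive beta :: "dB \<Rightarrow> dB \<Rightarrow> bool" where
  beta_rule: "beta (App (Abs s) t) (subst s t 0)"
| appL: "beta s t \<Longrightarrow> beta (App s u) (App t u)"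
| appR: "beta s t \<Longrightarrow> beta (App u s) (App u t)"
| abs: "beta s t \<Longrightarrow> beta (Abs s) (Abs t)"

inductive head :: "dB \<Rightarrow> dB \<Rightarrow> bool" where
  head_rule: "head (App (Abs s) t) (subst s t 0)"
| head_appL: "head s t \<Longrightarrow> head (App s u) (App t u)"
| head_abs: "head s t \<Longrightarrow> head (Abs s) (Abs t)"

definition beta_normal :: "dB \<Rightarrow> bool" where
  "beta_normal M \<longleftrightarrow> \<not> (\<exists>N. beta M N)"

definition head_normal :: "dB \<Rightarrow> bool" where
  "head_normal M \<longleftrightarrow> \<not> (\<exists>N. head M N)"

inductive pd :: "dB \<Rightarrow> dB \<Rightarrow> bool" where
  pd_head: "head M M' \<Longrightarrow> pd M M'"
| pd_nf: "beta_normal M \<Longrightarrow> pd M M"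
| pd_abs: "head_normal (Abs P) \<Longrightarrow> \<not> beta_normal (Abs P) \<Longrightarrow> pd P P'
            \<Longrightarrow> pd (Abs P) (Abs P')"
| pd_app: "head_normal (App P1 P2) \<Longrightarrow> \<not> beta_normal (App P1 P2)
            \<Longrightarrow> pd P1 P1' \<Longrightarrow> pd P2 P2' \<Longrightarrow> pd (App P1 P2) (App P1' P2')"

datatype ptm = POmega | PVar nat | PApp ptm ptm | PAbs ptm

inductive ple :: "ptm \<Rightarrow> ptm \<Rightarrow> bool" where
  ple_refl: "ple P P"
| ple_trans: "ple P Q \<Longrightarrow> ple Q R \<Longrightarrow> ple P R"
| ple_Omega: "ple POmega P"
| ple_app: "ple P1 P1' \<Longrightarrow> ple P2 P2' \<Longrightarrow> ple (PApp P1 P2) (PApp P1' P2')"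
| ple_abs: "ple P P' \<Longrightarrow> ple (PAbs P) (PAbs P')"

primrec pabsn :: "nat \<Rightarrow> ptm \<Rightarrow> ptm" where
  "pabsn 0 P = P"
| "pabsn (Suc n) P = PAbs (pabsn n P)"

definition papps :: "ptm \<Rightarrow> ptm list \<Rightarrow> ptm" where
  "papps P As = foldl PApp P As"

inductive pnf :: "ptm \<Rightarrow> bool" where
  pnf_Omega: "pnf POmega"
| pnf_hd: "(\<forall>A\<in>set As. pnf A) \<Longrightarrow> pnf (pabsn n (papps (PVar x) As))"

text \<open>Head normal forms \<lambda>x1..xn. x M1..Mp; omega by recursion on this shape\<close>
primrec neutral :: "dB \<Rightarrow> bool" where
  "neutral (Var x) = True"
| "neutral (App M N) = neutral M"
| "neutral (Abs M) = False"

primrec omega :: "dB \<Rightarrow> ptm" where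
  "omega (Var x) = PVar x"
| "omega (Abs M) = PAbs (omega M)"
| "omega (App M N) = (if neutral M then PApp (omega M) (omega N) else POmega)"

definition down :: "ptm set \<Rightarrow> ptm set" where
  "down S = {Q. pnf Q \<and> (\<exists>P\<in>S. ple Q P)}"

definition obs :: "dB \<Rightarrow> ptm set" where
  "obs M = down {omega M}"

definition BT :: "dB \<Rightarrow> ptm set" where
  "BT M = (\<Union>N\<in>{N. beta\<^sup>*\<^sup>* M N}. down {omega N})"

definition max_seq :: "(dB \<Rightarrow> dB \<Rightarrow> bool) \<Rightarrow> dB \<Rightarrow> (nat \<Rightarrow> dB) \<Rightarrow> bool" where
  "max_seq R M f \<longleftrightarrow> f 0 = M \<and>
     (\<forall>n. R (f n) (f (Suc n)) \<or> ((\<nexists>N. R (f n) N) \<and> f (Suc n) = f n))"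

definition obs_lim :: "(dB \<Rightarrow> dB \<Rightarrow> bool) \<Rightarrow> dB \<Rightarrow> ptm set \<Rightarrow> bool" where
  "obs_lim R M r \<longleftrightarrow> (\<exists>f. max_seq R M f \<and> (\<Union>n. obs (f n)) = r)"

definition Lim :: "dB \<Rightarrow> (dB \<Rightarrow> dB \<Rightarrow> bool) \<Rightarrow> ptm set set" where
  "Lim M R = {r. obs_lim R M r}"

definition asympt_complete :: "(dB \<Rightarrow> dB \<Rightarrow> bool) \<Rightarrow> (dB \<Rightarrow> dB \<Rightarrow> bool) \<Rightarrow> bool" where
  "asympt_complete R' R \<longleftrightarrow>
     (\<forall>M q. obs_lim R M q \<longrightarrow> (\<exists>p. obs_lim R' M p \<and> q \<subseteq> p))"

definition asympt_uniform :: "(dB \<Rightarrow> dB \<Rightarrow> bool) \<Rightarrow> bool" where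
  "asympt_uniform R' \<longleftrightarrow>
     (\<forall>M. \<forall>r\<in>Lim M R'. \<forall>r'\<in>Lim M R'. r \<subseteq> r' \<longrightarrow> r' = r)"

definition obs_normalizing :: "(dB \<Rightarrow> dB \<Rightarrow> bool) \<Rightarrow> (dB \<Rightarrow> dB \<Rightarrow> bool) \<Rightarrow> bool" where
  "obs_normalizing R' R \<longleftrightarrow> asympt_complete R' R \<and> asympt_uniform R'"

definition multistep_strategy :: "(dB \<Rightarrow> dB \<Rightarrow> bool) \<Rightarrow> (dB \<Rightarrow> dB \<Rightarrow> bool) \<Rightarrow> bool" where
  "multistep_strategy R' R \<longleftrightarrow>
     (\<forall>M N. R' M N \<longrightarrow> R\<^sup>*\<^sup>* M N) \<and>
     (\<forall>M N. R' M N \<longrightarrow> (\<exists>N'. R M N') \<longrightarrow> R\<^sup>+\<^sup>+ M N) \<and>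
     (\<forall>M. \<exists>N. R' M N)"

end

theory Submission
  imports Defs "HOL-Library.Confluence"
begin

text \<open>
  From a term that is not in head normal form, a \<open>pd\<close>-step is a head step; from
  \<open>\<lambda>x\<^sub>1\<dots>x\<^sub>n. x M\<^sub>1\<dots>M\<^sub>p\<close> it is a \<open>pd\<close>-step in all arguments at once.
  If \<open>M\<close> \<beta>-reduces to a head normal form, then by standardization it head-reduces to one, so
  the number of deterministic head steps from \<open>M\<close> to head normal form is finite; every head
  step strictly decreases it, hence every \<open>pd\<close>-sequence from \<open>M\<close> reaches a head normal form.
  By confluence that head normal form has the same abstractions and head variable as any other
  head normal reduct of \<open>M\<close>, and induction on a finite approximant \<open>Q \<le> \<omega>(N)\<close> of a reduct
  \<open>N\<close> of \<open>M\<close> shows that \<open>Q \<le> \<omega>(M\<^sub>k)\<close> for all large \<open>k\<close>. Since \<open>pd\<close>-steps are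
  \<beta>-reductions and \<omega> is monotone under \<beta>, every maximal \<open>pd\<close>-sequence from \<open>M\<close> has limit
  exactly \<open>BT(M)\<close>, which contains the limit of every \<beta>-sequence.
\<close>

lemma lift_lift:
  "i < k + 1 \<Longrightarrow> lift (lift t i) (Suc k) = lift (lift t k) i"
  by (induction t arbitrary: i k) auto

lemma lift_subst [simp]:
  "j < i + 1 \<Longrightarrow> lift (subst t s j) i = subst (lift t (i + 1)) (lift s i) j"
  by (induction t arbitrary: i j s) (auto simp: lift_lift)

lemma lift_subst_lt:
  "i < j + 1 \<Longrightarrow> lift (subst t s j) i = subst (lift t i) (lift s i) (j + 1)"
  by (induction t arbitrary: i j s) (auto simp: lift_lift)

lemma subst_lift [simp]: "subst (lift t k) s k = t"
  by (induction t arbitrary: k s) auto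

lemma subst_subst:
  "i < j + 1 \<Longrightarrow> subst (subst t (lift v i) (Suc j)) (subst u v j) i = subst (subst t u i) v j"
  by (induction t arbitrary: i j u v) (auto simp: lift_lift [symmetric] lift_subst_lt)

lemma subst_subst_0: "subst (subst t (lift v 0) (Suc j)) (subst u v j) 0 = subst (subst t u 0) v j"
  using subst_subst[of 0 j] by simp

lemma rtrancl_beta_AppL: "beta\<^sup>*\<^sup>* s t \<Longrightarrow> beta\<^sup>*\<^sup>* (App s u) (App t u)"
  by (induction rule: rtranclp_induct) (auto intro: rtranclp.rtrancl_into_rtrancl beta.appL)

lemma rtrancl_beta_AppR: "beta\<^sup>*\<^sup>* s t \<Longrightarrow> beta\<^sup>*\<^sup>* (App u s) (App u t)"
  by (induction rule: rtranclp_induct) (auto intro: rtranclp.rtrancl_into_rtrancl beta.appR)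

lemma rtrancl_beta_Abs: "beta\<^sup>*\<^sup>* s t \<Longrightarrow> beta\<^sup>*\<^sup>* (Abs s) (Abs t)"
  by (induction rule: rtranclp_induct) (auto intro: rtranclp.rtrancl_into_rtrancl beta.abs)

lemma rtrancl_beta_App: "beta\<^sup>*\<^sup>* s t \<Longrightarrow> beta\<^sup>*\<^sup>* u v \<Longrightarrow> beta\<^sup>*\<^sup>* (App s u) (App t v)"
  by (metis rtrancl_beta_AppL rtrancl_beta_AppR rtranclp_trans)

lemma trancl_beta_AppL: "beta\<^sup>+\<^sup>+ s t \<Longrightarrow> beta\<^sup>+\<^sup>+ (App s u) (App t u)"
  by (induction rule: tranclp_induct) (auto intro: tranclp.trancl_into_trancl beta.appL)

lemma trancl_beta_AppR: "beta\<^sup>+\<^sup>+ s t \<Longrightarrow> beta\<^sup>+\<^sup>+ (App u s) (App u t)"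
  by (induction rule: tranclp_induct) (auto intro: tranclp.trancl_into_trancl beta.appR)

lemma trancl_beta_Abs: "beta\<^sup>+\<^sup>+ s t \<Longrightarrow> beta\<^sup>+\<^sup>+ (Abs s) (Abs t)"
  by (induction rule: tranclp_induct) (auto intro: tranclp.trancl_into_trancl beta.abs)

section \<open>Confluence\<close>

inductive par_beta :: "dB \<Rightarrow> dB \<Rightarrow> bool" where
  par_beta_Var: "par_beta (Var n) (Var n)"
| par_beta_Abs: "par_beta s t \<Longrightarrow> par_beta (Abs s) (Abs t)"
| par_beta_App: "par_beta s s' \<Longrightarrow> par_beta t t' \<Longrightarrow> par_beta (App s t) (App s' t')"
| par_beta_redex: "par_beta s s' \<Longrightarrow> par_beta t t' \<Longrightarrow> par_beta (App (Abs s) t) (subst s' t' 0)"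

inductive_cases par_beta_AbsE: "par_beta (Abs s) t"

lemma par_beta_refl [simp]: "par_beta t t"
  by (induction t) (auto intro: par_beta.intros)

lemma beta_into_par_beta: "beta s t \<Longrightarrow> par_beta s t"
  by (induction rule: beta.induct) (auto intro: par_beta.intros)

lemma par_beta_into_rtrancl_beta: "par_beta s t \<Longrightarrow> beta\<^sup>*\<^sup>* s t"
proof (induction rule: par_beta.induct)
  case (par_beta_redex s s' t t')
  then have "beta\<^sup>*\<^sup>* (App (Abs s) t) (App (Abs s') t')"
    by (auto intro: rtrancl_beta_App rtrancl_beta_Abs)
  then show ?case by (meson beta.beta_rule rtranclp.rtrancl_into_rtrancl)
qed (auto intro: rtrancl_beta_App rtrancl_beta_Abs)

lemma rtrancl_beta_eq_rtrancl_par_beta: "beta\<^sup>*\<^sup>* = par_beta\<^sup>*\<^sup>*"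
proof (rule antisym)
  show "beta\<^sup>*\<^sup>* \<le> par_beta\<^sup>*\<^sup>*"
    by (rule rtranclp_mono) (auto intro: beta_into_par_beta)
  have "par_beta\<^sup>*\<^sup>* \<le> (beta\<^sup>*\<^sup>*)\<^sup>*\<^sup>*"
    by (rule rtranclp_mono) (auto intro: par_beta_into_rtrancl_beta)
  then show "par_beta\<^sup>*\<^sup>* \<le> beta\<^sup>*\<^sup>*" by simp
qed

lemma par_beta_lift: "par_beta s t \<Longrightarrow> par_beta (lift s i) (lift t i)"
proof (induction arbitrary: i rule: par_beta.induct)
  case (par_beta_redex s s' t t')
  then show ?case
    using par_beta.par_beta_redex[of "lift s (i+1)" "lift s' (i+1)" "lift t i" "lift t' i"] by simp
qed (auto intro: par_beta.intros)

lemma par_beta_subst: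
  "par_beta s s' \<Longrightarrow> par_beta t t' \<Longrightarrow> par_beta (subst s t k) (subst s' t' k)"
proof (induction arbitrary: t t' k rule: par_beta.induct)
  case (par_beta_redex s s' u u')
  then have "par_beta (App (Abs (subst s (lift t 0) (Suc k))) (subst u t k))
      (subst (subst s' (lift t' 0) (Suc k)) (subst u' t' k) 0)"
    by (intro par_beta.intros) (auto intro!: par_beta_lift)
  then show ?case by (simp add: subst_subst_0)
next
  case (par_beta_Abs s s')
  then show ?case by (simp add: par_beta.par_beta_Abs par_beta_lift)
qed (auto intro: par_beta.intros)

text \<open>Takahashi's complete development.\<close>

fun cd :: "dB \<Rightarrow> dB" where
  "cd (Var n) = Var n"
| "cd (Abs s) = Abs (cd s)"
| "cd (App (Abs s) t) = subst (cd s) (cd t) 0"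
| "cd (App s t) = App (cd s) (cd t)"

lemma par_beta_cd: "par_beta s t \<Longrightarrow> par_beta t (cd s)"
proof (induction rule: par_beta.induct)
  case (par_beta_App s s' u u')
  show ?case
  proof (cases s)
    case (Abs s0)
    with par_beta_App obtain s0' where "s' = Abs s0'" "par_beta s0 s0'"
      by (auto elim: par_beta_AbsE)
    with par_beta_App Abs show ?thesis
      by (auto elim: par_beta_AbsE intro: par_beta.intros)
  qed (use par_beta_App in \<open>auto intro: par_beta.intros\<close>)
qed (auto intro: par_beta.intros par_beta_subst)

lemma confluentp_beta: "confluentp beta"
proof -
  have "strong_confluentp par_beta"
    by (rule strong_confluentpI) (meson par_beta_cd r_into_rtranclp sup2CI)
  then have "confluentp par_beta" by (rule strong_confluentp_imp_confluentp)
  then show ?thesis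
    by (intro confluentpI) (auto simp: rtrancl_beta_eq_rtrancl_par_beta dest: confluentpD)
qed

fun hnf :: "dB \<Rightarrow> bool" where
  "hnf (Var x) = True"
| "hnf (Abs M) = hnf M"
| "hnf (App M N) = neutral M"

lemma neutral_hnf: "neutral M \<Longrightarrow> hnf M"
  by (induction M) auto

lemma head_into_beta: "head s t \<Longrightarrow> beta s t"
  by (induction rule: head.induct) (auto intro: beta.intros)

lemma head_not_hnf: "head M N \<Longrightarrow> \<not> hnf M"
  by (induction rule: head.induct) (auto intro: neutral_hnf)

lemma head_subst: "head s t \<Longrightarrow> head (subst s u k) (subst t u k)"
proof (induction arbitrary: u k rule: head.induct)
  case (head_rule s t)
  then show ?case
    using head.head_rule[of "subst s (lift u 0) (Suc k)" "subst t u k"] by (simp add: subst_subst_0)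
qed (auto intro: head.intros)

lemma head_lift: "head s t \<Longrightarrow> head (lift s i) (lift t i)"
proof (induction arbitrary: i rule: head.induct)
  case (head_rule s t)
  then show ?case using head.head_rule[of "lift s (i+1)" "lift t i"] by simp
qed (auto intro: head.intros)

lemma rtrancl_head_AppL: "head\<^sup>*\<^sup>* s t \<Longrightarrow> head\<^sup>*\<^sup>* (App s u) (App t u)"
  by (induction rule: rtranclp_induct) (auto intro: rtranclp.rtrancl_into_rtrancl head.head_appL)

lemma rtrancl_head_Abs: "head\<^sup>*\<^sup>* s t \<Longrightarrow> head\<^sup>*\<^sup>* (Abs s) (Abs t)"
  by (induction rule: rtranclp_induct) (auto intro: rtranclp.rtrancl_into_rtrancl head.head_abs)

lemma rtrancl_head_lift: "head\<^sup>*\<^sup>* s t \<Longrightarrow> head\<^sup>*\<^sup>* (lift s i) (lift t i)"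
  by (induction rule: rtranclp_induct) (auto intro: rtranclp.rtrancl_into_rtrancl head_lift)

lemma rtrancl_head_subst: "head\<^sup>*\<^sup>* s t \<Longrightarrow> head\<^sup>*\<^sup>* (subst s u k) (subst t u k)"
  by (induction rule: rtranclp_induct) (auto intro: rtranclp.rtrancl_into_rtrancl head_subst)

text \<open>\<open>head\<close> may also reduce inside the body of a head redex; \<open>dhead\<close> is its deterministic
  restriction, contracting only the head redex.\<close>

inductive dhead :: "dB \<Rightarrow> dB \<Rightarrow> bool" where
  dhead_beta: "dhead (App (Abs s) t) (subst s t 0)"
| dhead_AppL: "dhead s t \<Longrightarrow> (\<nexists>b. s = Abs b) \<Longrightarrow> dhead (App s u) (App t u)"
| dhead_Abs: "dhead s t \<Longrightarrow> dhead (Abs s) (Abs t)"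

inductive_cases dhead_AppE: "dhead (App s u) t"

lemma dhead_into_head: "dhead s t \<Longrightarrow> head s t"
  by (induction rule: dhead.induct) (auto intro: head.intros)

lemma dhead_deterministic: "dhead M N1 \<Longrightarrow> dhead M N2 \<Longrightarrow> N1 = N2"
proof (induction arbitrary: N2 rule: dhead.induct)
  case (dhead_beta s t)
  then show ?case by (cases rule: dhead_AppE) auto
next
  case (dhead_AppL s t u)
  from dhead_AppL.prems dhead_AppL.hyps(2) obtain s' where "N2 = App s' u" "dhead s s'"
    by (cases rule: dhead.cases) auto
  with dhead_AppL.IH show ?case by auto
next
  case (dhead_Abs s t)
  from dhead_Abs.prems obtain s' where "N2 = Abs s'" "dhead s s'"
    by (cases rule: dhead.cases) auto
  with dhead_Abs.IH show ?case by auto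
qed

lemma ex_dhead_if_not_hnf: "\<not> hnf M \<Longrightarrow> \<exists>N. dhead M N"
proof (induction M)
  case (App M1 M2)
  then show ?case
    by (cases M1) (auto intro: dhead.intros)
qed (auto intro: dhead.intros)

lemma head_normal_iff_hnf: "head_normal M \<longleftrightarrow> hnf M"
  unfolding head_normal_def using head_not_hnf ex_dhead_if_not_hnf dhead_into_head by blast

lemma head_dhead_commute:
  "head M M' \<Longrightarrow> dhead M D \<Longrightarrow> M' = D \<or> (\<exists>D'. dhead M' D' \<and> head D D')"
proof (induction arbitrary: D rule: head.induct)
  case (head_rule s t)
  then show ?case by (cases rule: dhead_AppE) auto
next
  case (head_appL s t u)
  from head_appL.prems consider
      (redex) s0 where "s = Abs s0" "D = subst s0 u 0"
    | (AppL) s' where "D = App s' u" "dhead s s'" "\<nexists>b. s = Abs b"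
    by (cases rule: dhead_AppE) auto
  then show ?case
  proof cases
    case redex
    with head_appL.hyps obtain t0 where "t = Abs t0" "head s0 t0"
      by (cases rule: head.cases) auto
    with redex show ?thesis by (auto intro: dhead.intros head_subst)
  next
    case AppL
    from head_appL.IH[OF \<open>dhead s s'\<close>] show ?thesis
    proof
      assume "\<exists>D'. dhead t D' \<and> head s' D'"
      then obtain D' where D': "dhead t D'" "head s' D'" by blast
      show ?thesis
      proof (cases "\<exists>b. t = Abs b")
        case True
        with head_appL.hyps AppL have "dhead s t"
          by (cases rule: head.cases) (auto intro: dhead.intros)
        with AppL dhead_deterministic show ?thesis by blast
      next
        case False
        with D' have "dhead (App t u) (App D' u)" "head (App s' u) (App D' u)"
          by (auto intro: dhead.intros head.intros)
        with AppL show ?thesis by blast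
      qed
    qed (use AppL in simp)
  qed
next
  case (head_abs s t)
  from head_abs.prems obtain s' where "D = Abs s'" "dhead s s'"
    by (cases rule: dhead.cases) auto
  with head_abs.IH show ?case by (auto intro: dhead.intros head.intros)
qed

inductive hnf_in :: "dB \<Rightarrow> nat \<Rightarrow> bool" where
  hnf_in_0: "hnf M \<Longrightarrow> hnf_in M 0"
| hnf_in_Suc: "dhead M N \<Longrightarrow> hnf_in N k \<Longrightarrow> hnf_in M (Suc k)"

lemma hnf_in_head_decreasing: "hnf_in M k \<Longrightarrow> head M M' \<Longrightarrow> \<exists>k'<k. hnf_in M' k'"
proof (induction arbitrary: M' rule: hnf_in.induct)
  case (hnf_in_0 M)
  then show ?case by (auto dest: head_not_hnf)
next
  case (hnf_in_Suc M N k)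
  from head_dhead_commute[OF hnf_in_Suc.prems hnf_in_Suc.hyps(1)] show ?case
  proof
    assume "\<exists>D'. dhead M' D' \<and> head N D'"
    then obtain D' where "dhead M' D'" "head N D'" by blast
    with hnf_in_Suc.IH obtain k' where "k' < k" "hnf_in D' k'" by blast
    with \<open>dhead M' D'\<close> show ?case by (auto intro: hnf_in.intros)
  qed (use hnf_in_Suc.hyps in auto)
qed

lemma hnf_in_head_backward: "hnf_in M' k \<Longrightarrow> head M M' \<Longrightarrow> \<exists>j. hnf_in M j"
proof (induction arbitrary: M rule: hnf_in.induct)
  case (hnf_in_0 M')
  obtain D where D: "dhead M D"
    using hnf_in_0.prems head_not_hnf ex_dhead_if_not_hnf by blast
  have "\<nexists>D'. dhead M' D'"
    using hnf_in_0.hyps dhead_into_head head_not_hnf by blast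
  with head_dhead_commute[OF hnf_in_0.prems D] have "M' = D" by blast
  with D hnf_in_0.hyps have "hnf_in M 1" by (auto intro: hnf_in.intros)
  then show ?case ..
next
  case (hnf_in_Suc M' N k)
  obtain D where D: "dhead M D"
    using hnf_in_Suc.prems head_not_hnf ex_dhead_if_not_hnf by blast
  from head_dhead_commute[OF hnf_in_Suc.prems D] show ?case
  proof
    assume "M' = D"
    with D hnf_in_Suc.hyps have "hnf_in M (Suc (Suc k))" by (auto intro: hnf_in.intros)
    then show ?case ..
  next
    assume "\<exists>D'. dhead M' D' \<and> head D D'"
    then obtain D' where "dhead M' D'" "head D D'" by blast
    with hnf_in_Suc.hyps(1) have "head D N" by (metis dhead_deterministic)
    with hnf_in_Suc.IH obtain j where "hnf_in D j" by blast
    with D have "hnf_in M (Suc j)" by (rule hnf_in.hnf_in_Suc)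
    then show ?case ..
  qed
qed

lemma rtrancl_head_hnf_in: "head\<^sup>*\<^sup>* M L \<Longrightarrow> hnf L \<Longrightarrow> \<exists>k. hnf_in M k"
  by (induction rule: converse_rtranclp_induct) (auto intro: hnf_in.intros dest: hnf_in_head_backward)

section \<open>Standardization to head normal form\<close>

text \<open>Internal parallel reduction: parallel reduction that contracts no redex on the head spine.\<close>

inductive par_int :: "dB \<Rightarrow> dB \<Rightarrow> bool" where
  par_int_Var: "par_int (Var n) (Var n)"
| par_int_Abs: "par_int s t \<Longrightarrow> par_int (Abs s) (Abs t)"
| par_int_App: "par_int s s' \<Longrightarrow> par_beta t t' \<Longrightarrow> par_int (App s t) (App s' t')"

lemma par_int_into_par_beta: "par_int s t \<Longrightarrow> par_beta s t"
  by (induction rule: par_int.induct) (auto intro: par_beta.intros)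

lemma par_int_lift: "par_int s t \<Longrightarrow> par_int (lift s i) (lift t i)"
  by (induction arbitrary: i rule: par_int.induct) (auto intro: par_int.intros par_beta_lift)

lemma par_int_subst:
  assumes "par_int L N" "par_beta M N'" "head\<^sup>*\<^sup>* M L'" "par_int L' N'"
  shows "\<exists>L''. head\<^sup>*\<^sup>* (subst L M k) L'' \<and> par_int L'' (subst N N' k)"
  using assms
proof (induction arbitrary: M N' L' k rule: par_int.induct)
  case (par_int_Var n)
  then show ?case by (auto intro: par_int.intros)
next
  case (par_int_Abs s t)
  have "head\<^sup>*\<^sup>* (lift M 0) (lift L' 0)" "par_int (lift L' 0) (lift N' 0)"
    using par_int_Abs.prems by (auto intro: rtrancl_head_lift par_int_lift)
  with par_int_Abs.IH[OF par_beta_lift[OF par_int_Abs.prems(1)]] obtain L'' where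
    "head\<^sup>*\<^sup>* (subst s (lift M 0) (Suc k)) L''" "par_int L'' (subst t (lift N' 0) (Suc k))"
    by blast
  then show ?case by (auto intro: rtrancl_head_Abs par_int.intros)
next
  case (par_int_App s s' t t')
  from par_int_App.IH[OF par_int_App.prems] obtain L'' where
    "head\<^sup>*\<^sup>* (subst s M k) L''" "par_int L'' (subst s' N' k)" by blast
  moreover have "par_beta (subst t M k) (subst t' N' k)"
    using par_int_App.hyps(2) par_int_App.prems(1) by (rule par_beta_subst)
  ultimately show ?case by (auto intro: rtrancl_head_AppL par_int.intros)
qed

lemma par_beta_head_par_int: "par_beta M N \<Longrightarrow> \<exists>L. head\<^sup>*\<^sup>* M L \<and> par_int L N"
proof (induction rule: par_beta.induct)
  case (par_beta_redex s s' t t')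
  from par_beta_redex.IH(1) obtain L where L: "head\<^sup>*\<^sup>* s L" "par_int L s'" by blast
  from par_beta_redex.IH(2) obtain L' where "head\<^sup>*\<^sup>* t L'" "par_int L' t'" by blast
  with par_int_subst[OF L(2) par_beta_redex.hyps(2)] obtain L'' where
    L'': "head\<^sup>*\<^sup>* (subst L t 0) L''" "par_int L'' (subst s' t' 0)" by blast
  have "head (App (Abs s) t) (subst s t 0)" by (rule head_rule)
  moreover have "head\<^sup>*\<^sup>* (subst s t 0) (subst L t 0)" using L(1) by (rule rtrancl_head_subst)
  ultimately have "head\<^sup>*\<^sup>* (App (Abs s) t) L''" using L''(1)
    by (meson converse_rtranclp_into_rtranclp rtranclp_trans)
  with L'' show ?case by blast
next
  case (par_beta_App s s' t t')
  then obtain L where "head\<^sup>*\<^sup>* s L" "par_int L s'" by blast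
  with par_beta_App.hyps(2) show ?case by (blast intro: rtrancl_head_AppL par_int.par_int_App)
next
  case (par_beta_Abs s t)
  then obtain L where "head\<^sup>*\<^sup>* s L" "par_int L t" by blast
  then show ?case by (blast intro: rtrancl_head_Abs par_int.par_int_Abs)
qed (blast intro: par_int.intros)

lemma par_int_head_postpone: "head N N' \<Longrightarrow> par_int L N \<Longrightarrow> \<exists>L'. head\<^sup>*\<^sup>* L L' \<and> par_beta L' N'"
proof (induction arbitrary: L rule: head.induct)
  case (head_rule s t)
  from head_rule obtain l t0 where L: "L = App l t0" "par_int l (Abs s)" "par_beta t0 t"
    by (cases rule: par_int.cases) auto
  from L(2) obtain s0 where "l = Abs s0" "par_int s0 s"
    by (cases rule: par_int.cases) auto
  with L have L: "L = App (Abs s0) t0" "par_int s0 s" "par_beta t0 t" by auto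
  then have "head L (subst s0 t0 0)" by (auto intro: head.intros)
  moreover have "par_beta (subst s0 t0 0) (subst s t 0)"
    using L par_int_into_par_beta par_beta_subst by blast
  ultimately show ?case by blast
next
  case (head_appL s t u)
  from head_appL.prems obtain l1 l2 where L: "L = App l1 l2" "par_int l1 s" "par_beta l2 u"
    by (cases rule: par_int.cases) auto
  from head_appL.IH[OF L(2)] obtain l1' where "head\<^sup>*\<^sup>* l1 l1'" "par_beta l1' t" by blast
  with L show ?case by (auto intro: rtrancl_head_AppL par_beta.intros)
next
  case (head_abs s t)
  from head_abs.prems obtain l where L: "L = Abs l" "par_int l s"
    by (cases rule: par_int.cases) auto
  from head_abs.IH[OF L(2)] obtain l' where "head\<^sup>*\<^sup>* l l'" "par_beta l' t" by blast
  with L show ?case by (auto intro: rtrancl_head_Abs par_beta.intros)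
qed

lemma par_int_neutral: "par_int s t \<Longrightarrow> neutral t \<Longrightarrow> neutral s"
  by (induction rule: par_int.induct) auto

lemma par_int_hnf: "par_int s t \<Longrightarrow> hnf t \<Longrightarrow> hnf s"
  by (induction rule: par_int.induct) (auto intro: par_int_neutral)

lemma par_beta_head_hnf:
  "head\<^sup>*\<^sup>* M L \<Longrightarrow> hnf L \<Longrightarrow> par_beta M' M \<Longrightarrow> \<exists>L'. head\<^sup>*\<^sup>* M' L' \<and> hnf L'"
proof (induction arbitrary: M' rule: converse_rtranclp_induct)
  case base
  with par_beta_head_par_int par_int_hnf show ?case by blast
next
  case (step M M1)
  from par_beta_head_par_int[OF step.prems(2)] obtain L0 where
    L0: "head\<^sup>*\<^sup>* M' L0" "par_int L0 M" by blast
  from par_int_head_postpone[OF step.hyps(1) L0(2)] obtain L1 where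
    "head\<^sup>*\<^sup>* L0 L1" "par_beta L1 M1" by blast
  with step.IH[OF step.prems(1)] L0(1) show ?case by (meson rtranclp_trans)
qed

theorem rtrancl_beta_hnf_head: "beta\<^sup>*\<^sup>* M N \<Longrightarrow> hnf N \<Longrightarrow> \<exists>L. head\<^sup>*\<^sup>* M L \<and> hnf L"
  by (induction rule: converse_rtranclp_induct) (auto dest: beta_into_par_beta par_beta_head_hnf)

section \<open>Head normal forms and their Boehm approximants\<close>

primrec absn :: "nat \<Rightarrow> dB \<Rightarrow> dB" where
  "absn 0 M = M"
| "absn (Suc n) M = Abs (absn n M)"

definition apps :: "dB \<Rightarrow> dB list \<Rightarrow> dB" where
  "apps h Ms = foldl App h Ms"

lemma apps_Nil [simp]: "apps h [] = h"
  by (simp add: apps_def)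

lemma apps_snoc [simp]: "apps h (Ms @ [M]) = App (apps h Ms) M"
  by (simp add: apps_def)

lemma papps_Nil [simp]: "papps h [] = h"
  by (simp add: papps_def)

lemma papps_snoc [simp]: "papps h (As @ [A]) = PApp (papps h As) A"
  by (simp add: papps_def)

lemma neutral_apps_Var [simp]: "neutral (apps (Var x) Ms)"
  by (induction Ms rule: rev_induct) auto

lemma neutral_iff_apps: "neutral M \<longleftrightarrow> (\<exists>x Ms. M = apps (Var x) Ms)"
proof
  show "neutral M \<Longrightarrow> \<exists>x Ms. M = apps (Var x) Ms"
  proof (induction M)
    case (Var x)
    have "Var x = apps (Var x) []" by simp
    then show ?case by blast
  next
    case (App M N)
    then obtain x Ms where "M = apps (Var x) Ms" by auto
    then have "App M N = apps (Var x) (Ms @ [N])" by simp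
    then show ?case by blast
  qed simp
qed auto

lemma hnf_iff_absn_apps: "hnf M \<longleftrightarrow> (\<exists>n x Ms. M = absn n (apps (Var x) Ms))"
proof
  show "hnf M \<Longrightarrow> \<exists>n x Ms. M = absn n (apps (Var x) Ms)"
  proof (induction M)
    case (Abs M)
    then obtain n x Ms where "M = absn n (apps (Var x) Ms)" by auto
    then have "Abs M = absn (Suc n) (apps (Var x) Ms)" by simp
    then show ?case by blast
  qed (metis absn.simps(1) hnf.simps(1,3) neutral.simps neutral_iff_apps)+
  show "\<exists>n x Ms. M = absn n (apps (Var x) Ms) \<Longrightarrow> hnf M"
  proof (elim exE)
    show "M = absn n (apps (Var x) Ms) \<Longrightarrow> hnf M" for n x Ms
      by (induction n arbitrary: M) (auto intro: neutral_hnf)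
  qed
qed

lemma apps_Var_neq_Abs [simp]: "apps (Var x) Ms \<noteq> Abs M" "Abs M \<noteq> apps (Var x) Ms"
  by (induction Ms rule: rev_induct) auto

lemma apps_Var_inject [simp]: "apps (Var x) Ms = apps (Var y) Ns \<longleftrightarrow> x = y \<and> Ms = Ns"
proof (induction Ms arbitrary: Ns rule: rev_induct)
  case Nil
  then show ?case by (cases Ns rule: rev_cases) auto
next
  case (snoc M Ms)
  then show ?case by (cases Ns rule: rev_cases) auto
qed

lemma absn_apps_inject [simp]:
  "absn n (apps (Var x) Ms) = absn m (apps (Var y) Ns) \<longleftrightarrow> n = m \<and> x = y \<and> Ms = Ns"
proof (induction n arbitrary: m)
  case 0
  then show ?case by (cases m) (auto dest: sym)
next
  case (Suc n)
  then show ?case by (cases m) auto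
qed

lemma omega_apps_Var [simp]: "omega (apps (Var x) Ms) = papps (PVar x) (map omega Ms)"
  by (induction Ms rule: rev_induct) auto

lemma beta_apps_Var:
  "beta (apps (Var x) Ms) P \<Longrightarrow> \<exists>Ps. P = apps (Var x) Ps \<and> list_all2 beta\<^sup>*\<^sup>* Ms Ps"
proof (induction Ms arbitrary: P rule: rev_induct)
  case Nil
  then show ?case by (cases rule: beta.cases) auto
next
  case (snoc M Ms)
  from snoc.prems consider
      (rator) Q where "P = App Q M" "beta (apps (Var x) Ms) Q"
    | (rand) M' where "P = App (apps (Var x) Ms) M'" "beta M M'"
    by (cases rule: beta.cases) auto
  then show ?case
  proof cases
    case rator
    with snoc.IH obtain Ps where "Q = apps (Var x) Ps" "list_all2 beta\<^sup>*\<^sup>* Ms Ps" by blast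
    with rator have "P = apps (Var x) (Ps @ [M]) \<and> list_all2 beta\<^sup>*\<^sup>* (Ms @ [M]) (Ps @ [M])"
      by (auto intro: list_all2_appendI)
    then show ?thesis ..
  next
    case rand
    then have "P = apps (Var x) (Ms @ [M']) \<and> list_all2 beta\<^sup>*\<^sup>* (Ms @ [M]) (Ms @ [M'])"
      by (auto intro: list_all2_appendI list_all2_refl)
    then show ?thesis ..
  qed
qed

lemma beta_absn_apps:
  "beta (absn n (apps (Var x) Ms)) P \<Longrightarrow>
    \<exists>Ps. P = absn n (apps (Var x) Ps) \<and> list_all2 beta\<^sup>*\<^sup>* Ms Ps"
proof (induction n arbitrary: P)
  case (Suc n)
  from Suc.prems obtain Q where "P = Abs Q" "beta (absn n (apps (Var x) Ms)) Q"
    by (cases rule: beta.cases) auto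
  with Suc.IH show ?case by auto
qed (simp add: beta_apps_Var)

lemma rtrancl_beta_absn_apps:
  "beta\<^sup>*\<^sup>* (absn n (apps (Var x) Ms)) P \<Longrightarrow>
    \<exists>Ps. P = absn n (apps (Var x) Ps) \<and> list_all2 beta\<^sup>*\<^sup>* Ms Ps"
proof (induction rule: rtranclp_induct)
  case base
  then show ?case by (auto intro: list_all2_refl)
next
  case (step P P')
  then obtain Ps where Ps: "P = absn n (apps (Var x) Ps)" "list_all2 beta\<^sup>*\<^sup>* Ms Ps" by blast
  with step.hyps(2) beta_absn_apps obtain Ps' where
    Ps': "P' = absn n (apps (Var x) Ps')" "list_all2 beta\<^sup>*\<^sup>* Ps Ps'" by blast
  from Ps(2) Ps'(2) have "list_all2 beta\<^sup>*\<^sup>* Ms Ps'"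
    by (rule list_all2_trans[rotated 1]) (rule rtranclp_trans)
  with Ps' show ?case by blast
qed

lemma hnf_common_reduct:
  assumes "beta\<^sup>*\<^sup>* M (absn n (apps (Var x) Ms))" "beta\<^sup>*\<^sup>* M (absn n' (apps (Var x') Ms'))"
  shows "n' = n \<and> x' = x \<and> (\<exists>Ps. list_all2 beta\<^sup>*\<^sup>* Ms Ps \<and> list_all2 beta\<^sup>*\<^sup>* Ms' Ps)"
proof -
  obtain P where "beta\<^sup>*\<^sup>* (absn n (apps (Var x) Ms)) P" "beta\<^sup>*\<^sup>* (absn n' (apps (Var x') Ms')) P"
    using confluentpD[OF confluentp_beta assms] by blast
  then show ?thesis by (auto dest!: rtrancl_beta_absn_apps)
qed

lemma ple_cases:
  "ple P Q \<Longrightarrow> (case P of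
      POmega \<Rightarrow> True
    | PVar x \<Rightarrow> Q = PVar x
    | PApp A B \<Rightarrow> \<exists>C D. Q = PApp C D \<and> ple A C \<and> ple B D
    | PAbs A \<Rightarrow> \<exists>C. Q = PAbs C \<and> ple A C)"
  by (induction rule: ple.induct) (auto split: ptm.splits intro: ple.intros)

lemma ple_PVar_iff [simp]: "ple (PVar x) Q \<longleftrightarrow> Q = PVar x"
  using ple_cases[of "PVar x" Q] ple_refl by auto

lemma ple_PApp_iff [simp]: "ple (PApp A B) Q \<longleftrightarrow> (\<exists>C D. Q = PApp C D \<and> ple A C \<and> ple B D)"
  using ple_cases[of "PApp A B" Q] ple_app by auto

lemma ple_PAbs_iff [simp]: "ple (PAbs A) Q \<longleftrightarrow> (\<exists>C. Q = PAbs C \<and> ple A C)"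
  using ple_cases[of "PAbs A" Q] ple_abs by auto

lemma beta_omega_mono: "beta s t \<Longrightarrow> ple (omega s) (omega t)"
proof (induction rule: beta.induct)
  case (appL s t u)
  have "neutral s \<Longrightarrow> neutral t"
    using appL.hyps by (induction rule: beta.induct) auto
  with appL.IH show ?case by (auto intro: ple_refl ple_Omega)
qed (auto intro: ple_refl ple_Omega)

lemma rtrancl_beta_omega_mono: "beta\<^sup>*\<^sup>* s t \<Longrightarrow> ple (omega s) (omega t)"
  by (induction rule: rtranclp_induct) (auto intro: ple_refl ple_trans beta_omega_mono)

lemma ple_pabsn_omega:
  "ple (pabsn n A) (omega N) \<Longrightarrow> \<exists>N'. N = absn n N' \<and> ple A (omega N')"
proof (induction n arbitrary: N)
  case (Suc n)
  then obtain C where C: "omega N = PAbs C" "ple (pabsn n A) C" by auto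
  then obtain N0 where "N = Abs N0" "omega N0 = C"
    by (cases N) (auto split: if_splits)
  with C Suc.IH[of N0] show ?case by (metis absn.simps(2))
qed simp

lemma ple_papps_omega:
  "ple (papps (PVar x) As) (omega N) \<Longrightarrow>
    \<exists>Ns. N = apps (Var x) Ns \<and> list_all2 (\<lambda>A N. ple A (omega N)) As Ns"
proof (induction As arbitrary: N rule: rev_induct)
  case Nil
  then show ?case by (cases N) (auto split: if_splits)
next
  case (snoc A As)
  then obtain C D where CD: "omega N = PApp C D" "ple (papps (PVar x) As) C" "ple A D"
    by auto
  then obtain N1 N2 where N: "N = App N1 N2" "omega N1 = C" "omega N2 = D"
    by (cases N) (auto split: if_splits)
  with CD snoc.IH[of N1] obtain Ns where
    "N1 = apps (Var x) Ns" "list_all2 (\<lambda>A N. ple A (omega N)) As Ns" by auto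
  with N CD show ?case by (intro exI[of _ "Ns @ [N2]"]) (auto intro: list_all2_appendI)
qed

lemma ple_absn_apps_omega:
  assumes "list_all2 (\<lambda>A M. ple A (omega M)) As Ms"
  shows "ple (pabsn n (papps (PVar x) As)) (omega (absn n (apps (Var x) Ms)))"
proof -
  from assms have "ple (papps (PVar x) As) (papps (PVar x) (map omega Ms))"
  proof (induction As arbitrary: Ms rule: rev_induct)
    case (snoc A As)
    then show ?case
      by (auto simp: list_all2_append1 list_all2_Cons1)
  qed (simp add: ple_refl)
  then show ?thesis by (induction n) auto
qed

lemma pd_into_rtrancl_beta: "pd M N \<Longrightarrow> beta\<^sup>*\<^sup>* M N"
  by (induction rule: pd.induct) (auto intro: head_into_beta rtrancl_beta_Abs rtrancl_beta_App)

lemma pd_into_trancl_beta: "pd M N \<Longrightarrow> \<exists>N'. beta M N' \<Longrightarrow> beta\<^sup>+\<^sup>+ M N"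
proof (induction rule: pd.induct)
  case (pd_abs P P')
  then obtain P0 where "beta P P0" by (auto elim: beta.cases)
  with pd_abs.IH show ?case by (blast intro: trancl_beta_Abs)
next
  case (pd_app P1 P2 P1' P2')
  from pd_app.prems obtain Y where Y: "beta (App P1 P2) Y" by blast
  from pd_app.hyps(1) have "\<nexists>B. P1 = Abs B"
    unfolding head_normal_def by (auto intro: head.intros)
  with Y consider "\<exists>P'. beta P1 P'" | "\<exists>P'. beta P2 P'"
    by (cases rule: beta.cases) auto
  then show ?case
  proof cases
    case 1
    with pd_app.IH(1) have "beta\<^sup>+\<^sup>+ (App P1 P2) (App P1' P2)" by (blast intro: trancl_beta_AppL)
    moreover have "beta\<^sup>*\<^sup>* (App P1' P2) (App P1' P2')"
      using pd_app.hyps(4) by (auto intro: rtrancl_beta_AppR pd_into_rtrancl_beta)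
    ultimately show ?thesis by (rule tranclp_rtranclp_tranclp)
  next
    case 2
    with pd_app.IH(2) have "beta\<^sup>+\<^sup>+ (App P1 P2) (App P1 P2')" by (blast intro: trancl_beta_AppR)
    moreover have "beta\<^sup>*\<^sup>* (App P1 P2') (App P1' P2')"
      using pd_app.hyps(3) by (auto intro: rtrancl_beta_AppL pd_into_rtrancl_beta)
    ultimately show ?thesis by (rule tranclp_rtranclp_tranclp)
  qed
qed (auto intro: head_into_beta simp: beta_normal_def)

lemma beta_normal_head_normal: "beta_normal M \<Longrightarrow> head_normal M"
  unfolding beta_normal_def head_normal_def using head_into_beta by blast

lemma ex_pd: "\<exists>N. pd M N"
proof (induction M)
  case (Var x)
  have "beta_normal (Var x)" unfolding beta_normal_def by (auto elim: beta.cases)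
  then show ?case by (auto intro: pd_nf)
next
  case (App P1 P2)
  consider "\<exists>N. head (App P1 P2) N" | "beta_normal (App P1 P2)"
    | "head_normal (App P1 P2)" "\<not> beta_normal (App P1 P2)"
    unfolding head_normal_def by blast
  then show ?case
    by cases (use App.IH in \<open>blast intro: pd.intros\<close>)+
next
  case (Abs P)
  consider "\<exists>N. head (Abs P) N" | "beta_normal (Abs P)"
    | "head_normal (Abs P)" "\<not> beta_normal (Abs P)"
    unfolding head_normal_def by blast
  then show ?case
    by cases (use Abs.IH in \<open>blast intro: pd.intros\<close>)+
qed

lemma pd_not_hnf:
  assumes "pd M N" "\<not> hnf M"
  shows "head M N"
proof -
  have "\<not> head_normal M" "\<not> beta_normal M"
    using assms(2) head_normal_iff_hnf beta_normal_head_normal by blast+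
  with assms(1) show ?thesis by (cases rule: pd.cases) auto
qed

lemma pd_App_neutral:
  assumes "pd (App P Q) N" "neutral P"
  shows "\<exists>P' Q'. N = App P' Q' \<and> pd P P' \<and> pd Q Q'"
  using assms(1)
proof (cases rule: pd.cases)
  case pd_head
  with assms(2) show ?thesis by (auto dest: head_not_hnf)
next
  case pd_nf
  then have "beta_normal P" "beta_normal Q"
    unfolding beta_normal_def by (auto intro: beta.appL beta.appR)
  with pd_nf show ?thesis by (auto intro: pd.pd_nf)
qed auto

lemma pd_Abs_hnf:
  assumes "pd (Abs P) N" "hnf P"
  shows "\<exists>P'. N = Abs P' \<and> pd P P'"
  using assms(1)
proof (cases rule: pd.cases)
  case pd_head
  with assms(2) show ?thesis by (auto dest: head_not_hnf)
next
  case pd_nf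
  then have "beta_normal P"
    unfolding beta_normal_def by (auto intro: beta.abs)
  with pd_nf show ?thesis by (auto intro: pd.pd_nf)
qed auto

lemma pd_absn_apps:
  "pd (absn n (apps (Var x) Ms)) N \<Longrightarrow> \<exists>Ns. N = absn n (apps (Var x) Ns) \<and> list_all2 pd Ms Ns"
proof (induction n arbitrary: N)
  case 0
  then show ?case
  proof (induction Ms arbitrary: N rule: rev_induct)
    case Nil
    then show ?case by (cases rule: pd.cases) (auto dest: head_not_hnf)
  next
    case (snoc M Ms)
    from snoc.prems obtain N1 N2 where N: "N = App N1 N2" "pd (apps (Var x) Ms) N1" "pd M N2"
      using pd_App_neutral by fastforce
    with snoc.IH obtain Ns where "N1 = apps (Var x) Ns" "list_all2 pd Ms Ns" by auto
    with N show ?case by (intro exI[of _ "Ns @ [N2]"]) (auto intro: list_all2_appendI)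
  qed
next
  case (Suc n)
  from Suc.prems obtain N' where "N = Abs N'" "pd (absn n (apps (Var x) Ms)) N'"
    using pd_Abs_hnf hnf_iff_absn_apps by fastforce
  with Suc.IH show ?case by auto
qed

section \<open>Limits of \<open>pd\<close>-sequences\<close>

definition reduction_seq :: "('a \<Rightarrow> 'a \<Rightarrow> bool) \<Rightarrow> (nat \<Rightarrow> 'a) \<Rightarrow> bool" where
  "reduction_seq R f \<longleftrightarrow> (\<forall>n. R (f n) (f (Suc n)))"

lemma eventually_list_all2:
  assumes "\<And>i. i < length xs \<Longrightarrow> \<forall>\<^sub>F k in F. P (xs ! i) (ys k ! i)"
    and "\<And>k. length (ys k) = length xs"
  shows "\<forall>\<^sub>F k in F. list_all2 P xs (ys k)"
proof -
  have "\<forall>\<^sub>F k in F. \<forall>i\<in>{..<length xs}. P (xs ! i) (ys k ! i)"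
    using assms(1) by (intro eventually_ball_finite) auto
  then show ?thesis
    by (rule eventually_mono) (auto intro: list_all2_all_nthI simp: assms(2))
qed

lemma reduction_seq_rtranclp:
  assumes "reduction_seq R f" "k \<le> l"
  shows "R\<^sup>*\<^sup>* (f k) (f l)"
  using assms(2)
  by (induction rule: dec_induct)
    (use assms(1) in \<open>auto simp: reduction_seq_def intro: rtranclp.rtrancl_into_rtrancl\<close>)

lemma pd_seq_beta:
  assumes "reduction_seq pd f" "k \<le> l"
  shows "beta\<^sup>*\<^sup>* (f k) (f l)"
proof -
  have "reduction_seq beta\<^sup>*\<^sup>* f"
    using assms(1) pd_into_rtrancl_beta by (simp add: reduction_seq_def)
  from reduction_seq_rtranclp[OF this assms(2)] show ?thesis by simp
qed

lemma pd_seq_reaches_hnf: "reduction_seq pd f \<Longrightarrow> hnf_in (f 0) k \<Longrightarrow> \<exists>m. hnf (f m)"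
proof (induction k arbitrary: f rule: less_induct)
  case (less k)
  show ?case
  proof (cases "hnf (f 0)")
    case False
    with less.prems(1) have "head (f 0) (f (Suc 0))"
      by (simp add: reduction_seq_def pd_not_hnf)
    with less.prems(2) obtain k' where "k' < k" "hnf_in (f (Suc 0)) k'"
      using hnf_in_head_decreasing by blast
    moreover have "reduction_seq pd (\<lambda>n. f (Suc n))"
      using less.prems(1) by (simp add: reduction_seq_def)
    ultimately obtain m where "hnf (f (Suc m))" using less.IH by blast
    then show ?thesis ..
  qed blast
qed

lemma pd_seq_hnf:
  assumes "reduction_seq pd f" "f 0 = absn n (apps (Var x) Ms)"
  obtains G where "\<And>k. f k = absn n (apps (Var x) (G k))" "G 0 = Ms"
    "\<And>k. length (G k) = length Ms" "\<And>i. i < length Ms \<Longrightarrow> reduction_seq pd (\<lambda>k. G k ! i)"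
proof -
  have "\<exists>Ns. f k = absn n (apps (Var x) Ns)" for k
  proof (induction k)
    case (Suc k)
    with assms(1) pd_absn_apps show ?case by (metis reduction_seq_def)
  qed (use assms(2) in blast)
  then obtain G where G: "\<And>k. f k = absn n (apps (Var x) (G k))" by metis
  have G0: "G 0 = Ms" using G[of 0] assms(2) by simp
  have step: "list_all2 pd (G k) (G (Suc k))" for k
  proof -
    have "pd (f k) (f (Suc k))" using assms(1) by (simp add: reduction_seq_def)
    then show ?thesis unfolding G by (auto dest: pd_absn_apps)
  qed
  have len: "length (G k) = length Ms" for k
    by (induction k) (auto simp: G0 list_all2_lengthD[OF step, symmetric])
  have "reduction_seq pd (\<lambda>k. G k ! i)" if "i < length Ms" for i
    unfolding reduction_seq_def using step len that by (auto intro: list_all2_nthD)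
  with G G0 len that show thesis by blast
qed

lemma pd_seq_normalizes_hnf:
  assumes "reduction_seq pd f" "beta\<^sup>*\<^sup>* (f 0) N" "hnf N"
  shows "\<exists>m. hnf (f m)"
proof -
  obtain L where "head\<^sup>*\<^sup>* (f 0) L" "hnf L"
    using assms(2,3) rtrancl_beta_hnf_head by blast
  then obtain k where "hnf_in (f 0) k"
    using rtrancl_head_hnf_in by blast
  with assms(1) show ?thesis by (rule pd_seq_reaches_hnf)
qed

lemma pd_seq_hnf_reduct:
  assumes "reduction_seq pd f" "beta\<^sup>*\<^sup>* (f 0) (absn n (apps (Var x) Ns))"
  obtains m G Ps where "\<And>k. f (k + m) = absn n (apps (Var x) (G k))"
    "\<And>k. length (G k) = length Ns" "\<And>i. i < length Ns \<Longrightarrow> reduction_seq pd (\<lambda>k. G k ! i)"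
    "list_all2 beta\<^sup>*\<^sup>* (G 0) Ps" "list_all2 beta\<^sup>*\<^sup>* Ns Ps"
proof -
  have "hnf (absn n (apps (Var x) Ns))"
    using hnf_iff_absn_apps by blast
  with assms obtain m where "hnf (f m)"
    using pd_seq_normalizes_hnf by blast
  then obtain n' x' Ms where fm: "f m = absn n' (apps (Var x') Ms)"
    using hnf_iff_absn_apps by blast
  have "beta\<^sup>*\<^sup>* (f 0) (f m)"
    using pd_seq_beta[OF assms(1)] by simp
  from hnf_common_reduct[OF assms(2) this[unfolded fm]] obtain Ps where
    "n' = n" "x' = x" and Ns_Ps: "list_all2 beta\<^sup>*\<^sup>* Ns Ps" and Ms_Ps: "list_all2 beta\<^sup>*\<^sup>* Ms Ps"
    by blast
  have "reduction_seq pd (\<lambda>k. f (k + m))"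
    using assms(1) by (simp add: reduction_seq_def)
  moreover have "(\<lambda>k. f (k + m)) 0 = absn n (apps (Var x) Ms)"
    using fm \<open>n' = n\<close> \<open>x' = x\<close> by simp
  ultimately obtain G where G: "\<And>k. f (k + m) = absn n (apps (Var x) (G k))" "G 0 = Ms"
    "\<And>k. length (G k) = length Ms" "\<And>i. i < length Ms \<Longrightarrow> reduction_seq pd (\<lambda>k. G k ! i)"
    using pd_seq_hnf[of "\<lambda>k. f (k + m)"] by blast
  moreover have "length Ms = length Ns"
    using Ns_Ps Ms_Ps by (auto dest!: list_all2_lengthD)
  ultimately show thesis
    using that[of m G Ps] Ns_Ps Ms_Ps by simp
qed

lemma pd_seq_approximates:
  assumes "pnf Q" "reduction_seq pd f" "beta\<^sup>*\<^sup>* (f 0) N" "ple Q (omega N)"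
  shows "\<forall>\<^sub>F k in sequentially. ple Q (omega (f k))"
  using assms
proof (induction arbitrary: f N rule: pnf.induct)
  case pnf_Omega
  then show ?case by (simp add: ple_Omega)
next
  case (pnf_hd As n x)
  obtain Ns where N: "N = absn n (apps (Var x) Ns)"
    and As_Ns: "list_all2 (\<lambda>A M. ple A (omega M)) As Ns"
    using ple_pabsn_omega[OF pnf_hd.prems(3)] ple_papps_omega by blast
  obtain m G Ps where
    G: "\<And>k. f (k + m) = absn n (apps (Var x) (G k))" "\<And>k. length (G k) = length Ns"
      "\<And>i. i < length Ns \<Longrightarrow> reduction_seq pd (\<lambda>k. G k ! i)"
    and G0_Ps: "list_all2 beta\<^sup>*\<^sup>* (G 0) Ps" and Ns_Ps: "list_all2 beta\<^sup>*\<^sup>* Ns Ps"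
    using pd_seq_hnf_reduct[OF pnf_hd.prems(1,2)[unfolded N]] by blast
  have len: "length Ns = length As"
    using As_Ns by (simp add: list_all2_lengthD)
  have "\<forall>\<^sub>F k in sequentially. ple (As ! i) (omega (G k ! i))" if i: "i < length As" for i
  proof (rule pnf_hd.IH[THEN bspec, THEN conjunct2, rule_format])
    show "As ! i \<in> set As" using i by simp
    show "reduction_seq pd (\<lambda>k. G k ! i)" using G(3) i len by simp
    show "beta\<^sup>*\<^sup>* ((\<lambda>k. G k ! i) 0) (Ps ! i)"
      using list_all2_nthD[OF G0_Ps] i len G(2) by simp
    have "ple (As ! i) (omega (Ns ! i))" "beta\<^sup>*\<^sup>* (Ns ! i) (Ps ! i)"
      using i len list_all2_nthD[OF As_Ns] list_all2_nthD[OF Ns_Ps] by auto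
    then show "ple (As ! i) (omega (Ps ! i))"
      by (blast intro: ple_trans rtrancl_beta_omega_mono)
  qed
  then have "\<forall>\<^sub>F k in sequentially. list_all2 (\<lambda>A M. ple A (omega M)) As (G k)"
    using G(2) len by (intro eventually_list_all2) auto
  then have "\<forall>\<^sub>F k in sequentially. ple (pabsn n (papps (PVar x) As)) (omega (f (k + m)))"
    by (rule eventually_mono) (simp add: G(1) ple_absn_apps_omega)
  then show ?case
    by (rule eventually_sequentially_seg[THEN iffD1])
qed

lemma max_seq_pd_reduction_seq: "max_seq pd M f \<Longrightarrow> reduction_seq pd f"
  unfolding max_seq_def reduction_seq_def using ex_pd by blast

lemma obs_subset_BT: "beta\<^sup>*\<^sup>* M N \<Longrightarrow> obs N \<subseteq> BT M"
  unfolding obs_def BT_def by auto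

lemma pd_limit_eq_BT:
  assumes "max_seq pd M f"
  shows "(\<Union>n. obs (f n)) = BT M"
proof
  have f0: "f 0 = M" and seq: "reduction_seq pd f"
    using assms max_seq_pd_reduction_seq by (auto simp: max_seq_def)
  show "(\<Union>n. obs (f n)) \<subseteq> BT M"
    using pd_seq_beta[OF seq, of 0] f0 obs_subset_BT by auto
  show "BT M \<subseteq> (\<Union>n. obs (f n))"
  proof
    fix Q
    assume "Q \<in> BT M"
    then obtain N where Q: "pnf Q" "ple Q (omega N)" and "beta\<^sup>*\<^sup>* M N"
      unfolding BT_def down_def by blast
    with f0 seq have "\<forall>\<^sub>F k in sequentially. ple Q (omega (f k))"
      using pd_seq_approximates[OF Q(1) seq] by simp
    then obtain n where "ple Q (omega (f n))"
      unfolding eventually_sequentially by blast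
    with Q show "Q \<in> (\<Union>n. obs (f n))"
      unfolding obs_def down_def by blast
  qed
qed

lemma ex_max_seq_pd: "\<exists>f. max_seq pd M f"
proof -
  define step where "step X = (SOME Y. pd X Y)" for X
  have "pd X (step X)" for X
    unfolding step_def using ex_pd by (rule someI_ex)
  then have "max_seq pd M (\<lambda>n. (step ^^ n) M)"
    unfolding max_seq_def by simp
  then show ?thesis by blast
qed

lemma Lim_pd: "Lim M pd = {BT M}"
proof (intro equalityI subsetI)
  fix r
  assume "r \<in> Lim M pd"
  then obtain f where "max_seq pd M f" "(\<Union>n. obs (f n)) = r"
    unfolding Lim_def obs_lim_def by blast
  then show "r \<in> {BT M}" using pd_limit_eq_BT by simp
next
  fix r
  assume "r \<in> {BT M}"
  obtain f where f: "max_seq pd M f" using ex_max_seq_pd by blast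
  with \<open>r \<in> {BT M}\<close> have "(\<Union>n. obs (f n)) = r" using pd_limit_eq_BT by simp
  with f show "r \<in> Lim M pd"
    unfolding Lim_def obs_lim_def by blast
qed

lemma max_seq_beta_rtranclp: "max_seq beta M f \<Longrightarrow> beta\<^sup>*\<^sup>* M (f n)"
proof (induction n)
  case (Suc n)
  then have "beta (f n) (f (Suc n)) \<or> f (Suc n) = f n"
    by (auto simp: max_seq_def)
  with Suc show ?case by (auto intro: rtranclp.rtrancl_into_rtrancl)
qed (simp add: max_seq_def)

lemma obs_lim_beta_subset_BT:
  assumes "obs_lim beta M q"
  shows "q \<subseteq> BT M"
proof -
  obtain f where f: "max_seq beta M f" and q: "q = (\<Union>n. obs (f n))"
    using assms unfolding obs_lim_def by blast
  have "obs (f n) \<subseteq> BT M" for n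
    using max_seq_beta_rtranclp[OF f] by (rule obs_subset_BT)
  then show ?thesis unfolding q by (simp add: UN_subset_iff)
qed

theorem mainTheorem18:
  shows "multistep_strategy pd beta \<and> obs_normalizing pd beta \<and> (\<forall>M. BT M \<in> Lim M pd)"
proof (intro conjI)
  show "multistep_strategy pd beta"
    unfolding multistep_strategy_def
    by (intro conjI allI impI) (simp_all add: pd_into_rtrancl_beta pd_into_trancl_beta ex_pd)
  show "obs_normalizing pd beta"
    unfolding obs_normalizing_def asympt_complete_def asympt_uniform_def
  proof (intro conjI allI impI ballI)
    fix M q
    assume "obs_lim beta M q"
    moreover have "obs_lim pd M (BT M)"
      using Lim_pd[of M] unfolding Lim_def by blast
    ultimately show "\<exists>p. obs_lim pd M p \<and> q \<subseteq> p"
      using obs_lim_beta_subset_BT by blast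
  qed (simp add: Lim_pd)
  show "\<forall>M. BT M \<in> Lim M pd"
    by (simp add: Lim_pd)
qed

end
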